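(* In the setting of the context, for every $j\in[N]$, $s\in\Gamma$, $k\in[n]$ and $\dagger\in\{+,-\}$, one has $u^\dagger_k\le h^\dagger_k$ pointwise on $S_f^{sP}$.
   Context: Standing setting: $\Gamma$ countably infinite, $n\in\mathbb N$, $\mathbb Z\Gamma$ the integral group ring (product $(fg)_t=\sum_sf_{ts^{-1}}g_s$, involution $(f^* )_s=f_{s^{-1}}$, $(f^* )^{(km)}=(f^{(mk)})^*$). $f=M-g\in M_n(\mathbb Z\Gamma)$, $M=\mathrm{diag}(M_1,\dots,M_n)$ positive integers, $M_k>\sum_m\|g^{(km)}\|_1$, and a subsemigroup $P\subseteq\Gamma\setminus\{e_\Gamma\}$ containing all $\mathrm{supp}(g^{(km)})$; $\bar P=P\cup\{e_\Gamma\}$, $\bar M=\max_kM_k$, $S_f=\prod_k\{0,\dots,M_k-1\}$, $Y=S_f^\Gamma$ (row vectors, entries $y_{s,k}$, $(yF)_m=\sum_ky_kF^{(km)}$ by convolution). For $E\subseteq\Gamma$, $\pi_E:S_f^\Gamma\to S_f^E$ is the restriction. $N\ge\bar M\|(f^* )^{-1}\|_{1,\infty}$ fixed integer, $V=(\{-N,\dots,N\}^\Gamma)^n\setminus\{0\}$, $Z=\{(y,c)\in Y\times V:y+cf^*\in Y\}$, $\varphi:Y\times V\to Y$ the projection, $Z^+_{j,s,k}=\{(y,c)\in Z:\max_{t,m}|c_{t,m}|=c_{s,k}=j\}$, $Z^-_{j,s,k}=\{(y,c)\in Z:\max_{t,m}|c_{t,m}|=-c_{s,k}=j\}$. $A_k=\{(a,m):g^{(km)}_a\neq0\}$;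 for $B_k\subseteq A_k$, $\dagger\in\{+,-\}$ (signs $\pm1$), $Z^\dagger_{j,s,k,B_k}$ is the set of $(y,c)\in Z^\dagger_{j,s,k}$ with $c_{sa,m}=\dagger\mathrm{sgn}(g^{(km)}_a)j$ for $(a,m)\in B_k$ and $c_{sa,m}\neq\dagger\mathrm{sgn}(g^{(km)}_a)j$ for $(a,m)\in A_k\setminus B_k$; $Z^\dagger_{j,s,k,B_k,i}=\{(y,c)\in Z^\dagger_{j,s,k,B_k}:y_{s,k}=i\}$. Functions on $S_f^{sP}$: $u^\dagger_k=\sum_{i=0}^{M_k-1}\chi_{\pi_{sP}\varphi(\bigcup_{B_k\subseteq A_k}Z^\dagger_{j,s,k,B_k,i})}$ and $h^\dagger_k=\sum_{(a,m)\in A_k}|g^{(km)}_a|\,\chi_{\pi_{sa\bar P}\varphi(Z^{\dagger\mathrm{sgn}(g^{(km)}_a)}_{j,sa,m})\times S_f^{sP\setminus sa\bar P}}$ (note $sa\bar P\subseteq sP$ since $a\in P$; $Z^{\pm\cdot\pm}$ means $Z^+$ or $Z^-$ according to the product sign). *)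

theory Defs
  imports "HOL-Analysis.Analysis" "HOL-Library.Countable" "HOL-Library.FuncSet"
begin

(* The group Gamma is a type 'g of class group_add: the group product s t is s + t,
   the identity e is 0, the inverse s^{-1} is - s.  Matrix indices k, m range over
   {..<n} (i.e. [n] shifted to start at 0). *)

definition supp :: "('g \<Rightarrow> 'b::zero) \<Rightarrow> 'g set" where
  "supp h = {s. h s \<noteq> 0}"

definition star :: "('g::group_add \<Rightarrow> 'b) \<Rightarrow> 'g \<Rightarrow> 'b" where
  "star h s = h (- s)"

definition fmat :: "(nat \<Rightarrow> int) \<Rightarrow> (nat \<Rightarrow> nat \<Rightarrow> 'g::group_add \<Rightarrow> int) \<Rightarrow> nat \<Rightarrow> nat \<Rightarrow> 'g \<Rightarrow> int" where
  "fmat M g k m s = (if k = m \<and> s = 0 then M k else 0) - g k m s"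

definition fstar :: "(nat \<Rightarrow> int) \<Rightarrow> (nat \<Rightarrow> nat \<Rightarrow> 'g::group_add \<Rightarrow> int) \<Rightarrow> nat \<Rightarrow> nat \<Rightarrow> 'g \<Rightarrow> int" where
  "fstar M g k m = star (fmat M g m k)"

definition conv :: "('g::group_add \<Rightarrow> real) \<Rightarrow> ('g \<Rightarrow> real) \<Rightarrow> 'g \<Rightarrow> real" where
  "conv A B t = (\<Sum>\<^sub>\<infinity>s. A (t + - s) * B s)"

definition matmul :: "nat \<Rightarrow> (nat \<Rightarrow> nat \<Rightarrow> 'g::group_add \<Rightarrow> real) \<Rightarrow> (nat \<Rightarrow> nat \<Rightarrow> 'g \<Rightarrow> real) \<Rightarrow> nat \<Rightarrow> nat \<Rightarrow> 'g \<Rightarrow> real" where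
  "matmul n A B k m = (\<lambda>t. \<Sum>l<n. conv (A k l) (B l m) t)"

definition ident :: "nat \<Rightarrow> nat \<Rightarrow> 'g::group_add \<Rightarrow> real" where
  "ident k m t = (if k = m \<and> t = 0 then 1 else 0)"

(* ||F||_{1,infty} = max_m sum_k ||F^{(km)}||_1  (operator norm of y |-> yF on l^infty row vectors) *)
definition norm1inf :: "nat \<Rightarrow> (nat \<Rightarrow> nat \<Rightarrow> 'g \<Rightarrow> real) \<Rightarrow> real" where
  "norm1inf n F = Max ((\<lambda>m. \<Sum>k<n. (\<Sum>\<^sub>\<infinity>t. \<bar>F k m t\<bar>)) ` {..<n})"

definition Sf :: "nat \<Rightarrow> (nat \<Rightarrow> int) \<Rightarrow> (nat \<Rightarrow> int) set" where
  "Sf n M = {v. \<forall>k. (k < n \<longrightarrow> 0 \<le> v k \<and> v k < M k) \<and> (n \<le> k \<longrightarrow> v k = 0)}"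

definition Yset :: "nat \<Rightarrow> (nat \<Rightarrow> int) \<Rightarrow> ('g \<Rightarrow> nat \<Rightarrow> int) set" where
  "Yset n M = {y. \<forall>t. y t \<in> Sf n M}"

definition Vset :: "nat \<Rightarrow> int \<Rightarrow> ('g \<Rightarrow> nat \<Rightarrow> int) set" where
  "Vset n N = {c. (\<forall>t k. (k < n \<longrightarrow> \<bar>c t k\<bar> \<le> N) \<and> (n \<le> k \<longrightarrow> c t k = 0)) \<and> c \<noteq> (\<lambda>_ _. 0)}"

definition rmul :: "nat \<Rightarrow> (nat \<Rightarrow> nat \<Rightarrow> 'g::group_add \<Rightarrow> int) \<Rightarrow> ('g \<Rightarrow> nat \<Rightarrow> int) \<Rightarrow> 'g \<Rightarrow> nat \<Rightarrow> int" where
  "rmul n F c t m = (if m < n then (\<Sum>k<n. \<Sum>s\<in>supp (F k m). c (t + - s) k * F k m s) else 0)"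

definition Zset :: "nat \<Rightarrow> (nat \<Rightarrow> int) \<Rightarrow> (nat \<Rightarrow> nat \<Rightarrow> 'g::group_add \<Rightarrow> int) \<Rightarrow> int \<Rightarrow> (('g \<Rightarrow> nat \<Rightarrow> int) \<times> ('g \<Rightarrow> nat \<Rightarrow> int)) set" where
  "Zset n M g N = {(y, c). y \<in> Yset n M \<and> c \<in> Vset n N \<and>
      (\<lambda>t m. y t m + rmul n (fstar M g) c t m) \<in> Yset n M}"

definition cmax :: "nat \<Rightarrow> ('g \<Rightarrow> nat \<Rightarrow> int) \<Rightarrow> int" where
  "cmax n c = Max {\<bar>c t m\<bar> | t m. m < n}"

(* Z^+_{j,s,k} (sigma = 1) and Z^-_{j,s,k} (sigma = -1) *)
definition Zsig :: "nat \<Rightarrow> (nat \<Rightarrow> int) \<Rightarrow> (nat \<Rightarrow> nat \<Rightarrow> 'g::group_add \<Rightarrow> int) \<Rightarrow> int \<Rightarrow> int \<Rightarrow> int \<Rightarrow> 'g \<Rightarrow> nat \<Rightarrow> (('g \<Rightarrow> nat \<Rightarrow> int) \<times> ('g \<Rightarrow> nat \<Rightarrow> int)) set" where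
  "Zsig n M g N \<sigma> j s k = {(y, c) \<in> Zset n M g N. cmax n c = j \<and> c s k = \<sigma> * j}"

definition Aset :: "nat \<Rightarrow> (nat \<Rightarrow> nat \<Rightarrow> 'g \<Rightarrow> int) \<Rightarrow> nat \<Rightarrow> ('g \<times> nat) set" where
  "Aset n g k = {(a, m). m < n \<and> g k m a \<noteq> 0}"

definition ZB :: "nat \<Rightarrow> (nat \<Rightarrow> int) \<Rightarrow> (nat \<Rightarrow> nat \<Rightarrow> 'g::group_add \<Rightarrow> int) \<Rightarrow> int \<Rightarrow> int \<Rightarrow> int \<Rightarrow> 'g \<Rightarrow> nat \<Rightarrow> ('g \<times> nat) set \<Rightarrow> (('g \<Rightarrow> nat \<Rightarrow> int) \<times> ('g \<Rightarrow> nat \<Rightarrow> int)) set" where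
  "ZB n M g N \<sigma> j s k B = {(y, c) \<in> Zsig n M g N \<sigma> j s k.
      (\<forall>(a, m) \<in> B. c (s + a) m = \<sigma> * sgn (g k m a) * j) \<and>
      (\<forall>(a, m) \<in> Aset n g k - B. c (s + a) m \<noteq> \<sigma> * sgn (g k m a) * j)}"

definition ZBi :: "nat \<Rightarrow> (nat \<Rightarrow> int) \<Rightarrow> (nat \<Rightarrow> nat \<Rightarrow> 'g::group_add \<Rightarrow> int) \<Rightarrow> int \<Rightarrow> int \<Rightarrow> int \<Rightarrow> 'g \<Rightarrow> nat \<Rightarrow> ('g \<times> nat) set \<Rightarrow> int \<Rightarrow> (('g \<Rightarrow> nat \<Rightarrow> int) \<times> ('g \<Rightarrow> nat \<Rightarrow> int)) set" where
  "ZBi n M g N \<sigma> j s k B i = {(y, c) \<in> ZB n M g N \<sigma> j s k B. y s k = i}"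

definition proj :: "'g set \<Rightarrow> ('g \<Rightarrow> 'b) \<Rightarrow> ('g \<Rightarrow> 'b)" where
  "proj E y = restrict y E"

definition ltrans :: "'g::group_add \<Rightarrow> 'g set \<Rightarrow> 'g set" where
  "ltrans s E = (\<lambda>p. s + p) ` E"

definition cfgprod :: "'g set \<Rightarrow> ('g \<Rightarrow> 'b) set \<Rightarrow> 'g set \<Rightarrow> ('g \<Rightarrow> 'b) set \<Rightarrow> ('g \<Rightarrow> 'b) set" where
  "cfgprod E1 A E2 B = {z \<in> extensional (E1 \<union> E2). restrict z E1 \<in> A \<and> restrict z E2 \<in> B}"

definition ufun :: "nat \<Rightarrow> (nat \<Rightarrow> int) \<Rightarrow> (nat \<Rightarrow> nat \<Rightarrow> 'g::group_add \<Rightarrow> int) \<Rightarrow> int \<Rightarrow> 'g set \<Rightarrow> int \<Rightarrow> int \<Rightarrow> 'g \<Rightarrow> nat \<Rightarrow> ('g \<Rightarrow> nat \<Rightarrow> int) \<Rightarrow> int" where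
  "ufun n M g N P \<sigma> j s k x = (\<Sum>i\<in>{0..M k - 1}.
      of_bool (x \<in> proj (ltrans s P) ` fst ` (\<Union>B\<in>Pow (Aset n g k). ZBi n M g N \<sigma> j s k B i)))"

definition hfun :: "nat \<Rightarrow> (nat \<Rightarrow> int) \<Rightarrow> (nat \<Rightarrow> nat \<Rightarrow> 'g::group_add \<Rightarrow> int) \<Rightarrow> int \<Rightarrow> 'g set \<Rightarrow> int \<Rightarrow> int \<Rightarrow> 'g \<Rightarrow> nat \<Rightarrow> ('g \<Rightarrow> nat \<Rightarrow> int) \<Rightarrow> int" where
  "hfun n M g N P \<sigma> j s k x = (\<Sum>(a, m)\<in>Aset n g k. \<bar>g k m a\<bar> *
      of_bool (x \<in> cfgprod (ltrans (s + a) (insert 0 P))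
                     (proj (ltrans (s + a) (insert 0 P)) ` fst ` Zsig n M g N (\<sigma> * sgn (g k m a)) j (s + a) m)
                     (ltrans s P - ltrans (s + a) (insert 0 P))
                     (Pi\<^sub>E (ltrans s P - ltrans (s + a) (insert 0 P)) (\<lambda>_. Sf n M))))"

end

theory Submission
  imports Defs
begin

text \<open>Suppose \<open>(y, c) \<in> Z\<^sup>+\<^sub>j\<^sub>,\<^sub>s\<^sub>,\<^sub>k\<close> and \<open>y\<^sub>s\<^sub>,\<^sub>k = i\<close>. The \<open>(s, k)\<close> entry of \<open>c f\<^sup>*\<close>
  is \<open>M\<^sub>k j - \<Sum> g\<^sub>a\<^sup>k\<^sup>m c\<^sub>s\<^sub>a\<^sub>,\<^sub>m\<close>, and each summand \<open>g\<^sub>a\<^sup>k\<^sup>m c\<^sub>s\<^sub>a\<^sub>,\<^sub>m\<close> is at most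
  \<open>|g\<^sub>a\<^sup>k\<^sup>m| (j - 1)\<close> unless \<open>c\<^sub>s\<^sub>a\<^sub>,\<^sub>m = sgn(g\<^sub>a\<^sup>k\<^sup>m) j\<close> (an extremal neighbour). As
  \<open>M\<^sub>k > \<Sum> |g\<^sub>a\<^sup>k\<^sup>m|\<close>, the constraint \<open>y\<^sub>s\<^sub>,\<^sub>k + (c f\<^sup>*)\<^sub>s\<^sub>,\<^sub>k < M\<^sub>k\<close> forces \<open>i + 1\<close>
  below the total weight \<open>|g\<^sub>a\<^sup>k\<^sup>m|\<close> of the extremal neighbours \<open>(sa, m)\<close>; each of them
  witnesses a term of \<open>h\<^sup>+\<^sub>k\<close>, since \<open>sa(P \<union> {e}) \<subseteq> sP\<close>. So at most \<open>h\<^sup>+\<^sub>k\<close> values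
  \<open>i = 0, 1, \<dots>\<close> contribute to \<open>u\<^sup>+\<^sub>k\<close>; symmetrically for \<open>\<dagger> = -\<close> only the top
  \<open>h\<^sup>-\<^sub>k\<close> values of \<open>i\<close> do.\<close>

lemma sum_Aset_eq:
  assumes "\<forall>m<n. finite (supp (g k m))"
  shows "(\<Sum>(a, m)\<in>Aset n g k. f a m) = (\<Sum>m<n. \<Sum>a\<in>supp (g k m). (f a m :: 'b::comm_monoid_add))"
proof -
  have Aset_eq: "Aset n g k = (\<lambda>(m, a). (a, m)) ` (SIGMA m:{..<n}. supp (g k m))"
    by (force simp: Aset_def supp_def)
  have "inj_on (\<lambda>(m, a). (a, m)) (SIGMA m:{..<n}. supp (g k m))"
    by (auto simp: inj_on_def)
  then have "(\<Sum>(a, m)\<in>Aset n g k. f a m) = (\<Sum>(m, a)\<in>(SIGMA m:{..<n}. supp (g k m)). f a m)"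
    unfolding Aset_eq by (subst sum.reindex) (simp_all add: comp_def case_prod_beta)
  also have "\<dots> = (\<Sum>m<n. \<Sum>a\<in>supp (g k m). f a m)"
    using assms by (subst sum.Sigma) auto
  finally show ?thesis .
qed

lemma rmul_fstar_summand:
  fixes g :: "nat \<Rightarrow> nat \<Rightarrow> 'g::group_add \<Rightarrow> int"
  assumes fin: "finite (supp (g k l))" and g0: "g k l 0 = 0"
  shows "(\<Sum>u\<in>supp (fstar M g l k). c (s - u) l * fstar M g l k u)
     = (if l = k then M k * c s k else 0) - (\<Sum>a\<in>supp (g k l). g k l a * c (s + a) l)"
proof -
  define F where "F = fstar M g l k"
  have F_eq: "F u = (if k = l \<and> u = 0 then M k else 0) - g k l (- u)" for u
    by (simp add: F_def fstar_def star_def fmat_def)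
  have zero_notin: "0 \<notin> uminus ` supp (g k l)"
    using g0 by (auto simp: supp_def)
  have "supp F \<subseteq> insert 0 (uminus ` supp (g k l))"
  proof
    fix u assume "u \<in> supp F"
    then have "u = 0 \<or> - u \<in> supp (g k l)"
      by (auto simp: supp_def F_eq split: if_splits)
    then show "u \<in> insert 0 (uminus ` supp (g k l))"
      by (auto intro: image_eqI[of _ _ "- u"])
  qed
  then have "(\<Sum>u\<in>supp F. c (s - u) l * F u)
      = (\<Sum>u\<in>insert 0 (uminus ` supp (g k l)). c (s - u) l * F u)"
    using fin by (intro sum.mono_neutral_left) (auto simp: supp_def)
  also have "\<dots> = c s l * F 0 + (\<Sum>a\<in>supp (g k l). c (s + a) l * F (- a))"
    using fin zero_notin by (simp add: sum.reindex inj_on_def)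
  also have "(\<Sum>a\<in>supp (g k l). c (s + a) l * F (- a)) = - (\<Sum>a\<in>supp (g k l). g k l a * c (s + a) l)"
    using g0 by (auto simp: F_eq supp_def sum_negf[symmetric] intro!: sum.cong)
  also have "F 0 = (if l = k then M k else 0)"
    using g0 by (auto simp: F_eq)
  finally show ?thesis
    unfolding F_def by (simp add: mult.commute)
qed

lemma rmul_fstar_eq:
  fixes g :: "nat \<Rightarrow> nat \<Rightarrow> 'g::group_add \<Rightarrow> int"
  assumes "k < n" and "\<forall>l<n. finite (supp (g k l))" and "\<forall>l<n. g k l 0 = 0"
  shows "rmul n (fstar M g) c s k = M k * c s k - (\<Sum>(a, l)\<in>Aset n g k. g k l a * c (s + a) l)"
proof -
  have "rmul n (fstar M g) c s k
      = (\<Sum>l<n. (if l = k then M k * c s k else 0) - (\<Sum>a\<in>supp (g k l). g k l a * c (s + a) l))"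
    using assms unfolding rmul_def by (auto intro!: sum.cong rmul_fstar_summand)
  also have "\<dots> = M k * c s k - (\<Sum>l<n. \<Sum>a\<in>supp (g k l). g k l a * c (s + a) l)"
    using assms(1) by (simp add: sum_subtractf)
  finally show ?thesis
    using assms(2) by (simp add: sum_Aset_eq)
qed

lemma signed_product_le:
  fixes g c \<sigma> j :: int
  assumes "g \<noteq> 0" "\<sigma> \<in> {1, -1}" "\<bar>c\<bar> \<le> j"
  shows "\<sigma> * (g * c) \<le> \<bar>g\<bar> * (j - 1) + \<bar>g\<bar> * of_bool (c = \<sigma> * sgn g * j)"
proof -
  define w where "w = \<sigma> * sgn g * c"
  have product_eq: "\<sigma> * (g * c) = \<bar>g\<bar> * w" and extremal_iff: "c = \<sigma> * sgn g * j \<longleftrightarrow> w = j"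
    and "w \<le> j"
    using assms by (auto simp: w_def sgn_if)
  have "\<bar>g\<bar> * w \<le> \<bar>g\<bar> * (j - 1)" if "w \<noteq> j"
    using \<open>w \<le> j\<close> that by (intro mult_left_mono) auto
  then show ?thesis
    unfolding product_eq extremal_iff by (cases "w = j") (simp_all add: algebra_simps)
qed

definition extremal_weight ::
    "nat \<Rightarrow> (nat \<Rightarrow> nat \<Rightarrow> 'g::group_add \<Rightarrow> int) \<Rightarrow> int \<Rightarrow> int \<Rightarrow> ('g \<Rightarrow> nat \<Rightarrow> int) \<Rightarrow> 'g \<Rightarrow> nat \<Rightarrow> int" where
  "extremal_weight n g \<sigma> j c s k =
     (\<Sum>(a, m)\<in>Aset n g k. \<bar>g k m a\<bar> * of_bool (c (s + a) m = \<sigma> * sgn (g k m a) * j))"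

lemma signed_rmul_fstar_ge:
  fixes g :: "nat \<Rightarrow> nat \<Rightarrow> 'g::group_add \<Rightarrow> int"
  assumes "k < n" and fin: "\<forall>l<n. finite (supp (g k l))" and "\<forall>l<n. g k l 0 = 0"
    and M_dom: "(\<Sum>m<n. \<Sum>a\<in>supp (g k m). \<bar>g k m a\<bar>) < M k"
    and \<sigma>: "\<sigma> \<in> {1, -1}" and "1 \<le> j" and c_bound: "\<forall>t m. m < n \<longrightarrow> \<bar>c t m\<bar> \<le> j"
    and c_sk: "c s k = \<sigma> * j"
  shows "M k - extremal_weight n g \<sigma> j c s k \<le> \<sigma> * rmul n (fstar M g) c s k"
proof -
  define D where "D = (\<Sum>(a, l)\<in>Aset n g k. g k l a * c (s + a) l)"
  define S where "S = (\<Sum>(a, m)\<in>Aset n g k. \<bar>g k m a\<bar>)"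
  have "S < M k"
    using M_dom fin by (simp add: S_def sum_Aset_eq)
  have "\<sigma> * D = (\<Sum>(a, l)\<in>Aset n g k. \<sigma> * (g k l a * c (s + a) l))"
    by (simp add: D_def sum_distrib_left case_prod_beta)
  also have "\<dots> \<le> (\<Sum>(a, m)\<in>Aset n g k.
      \<bar>g k m a\<bar> * (j - 1) + \<bar>g k m a\<bar> * of_bool (c (s + a) m = \<sigma> * sgn (g k m a) * j))"
    using \<sigma> c_bound by (intro sum_mono) (auto simp: Aset_def intro: signed_product_le)
  also have "\<dots> = (j - 1) * S + extremal_weight n g \<sigma> j c s k"
    by (simp add: S_def extremal_weight_def sum.distrib sum_distrib_left case_prod_beta mult.commute)
  also have "(j - 1) * S \<le> (j - 1) * M k"
    using \<open>S < M k\<close> \<open>1 \<le> j\<close> by (intro mult_left_mono) auto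
  finally have "\<sigma> * D \<le> (j - 1) * M k + extremal_weight n g \<sigma> j c s k"
    by simp
  moreover have "\<sigma> * rmul n (fstar M g) c s k = M k * j - \<sigma> * D"
    using assms(1-3) \<sigma> by (auto simp: rmul_fstar_eq c_sk D_def algebra_simps)
  ultimately show ?thesis
    by (simp add: algebra_simps)
qed

lemma abs_le_cmax:
  assumes "c \<in> Vset n N" "m < n"
  shows "\<bar>c t m\<bar> \<le> cmax n c"
proof -
  have "{\<bar>c t m\<bar> | t m. m < n} \<subseteq> {0..N}"
    using assms(1) by (auto simp: Vset_def)
  then have "finite {\<bar>c t m\<bar> | t m. m < n}"
    by (rule finite_subset) simp
  then show ?thesis
    unfolding cmax_def by (rule Max_ge) (use assms(2) in blast)
qed

lemma Zsig_extremal_weight_bound: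
  fixes g :: "nat \<Rightarrow> nat \<Rightarrow> 'g::group_add \<Rightarrow> int"
  assumes "k < n" and "\<forall>l<n. finite (supp (g k l))" and "\<forall>l<n. g k l 0 = 0"
    and "(\<Sum>m<n. \<Sum>a\<in>supp (g k m). \<bar>g k m a\<bar>) < M k"
    and \<sigma>: "\<sigma> \<in> {1, -1}" and "1 \<le> j" and yc: "(y, c) \<in> Zsig n M g N \<sigma> j s k"
  shows "(\<sigma> = 1 \<longrightarrow> y s k + 1 \<le> extremal_weight n g \<sigma> j c s k)
       \<and> (\<sigma> = -1 \<longrightarrow> M k - y s k \<le> extremal_weight n g \<sigma> j c s k)"
proof -
  have c_V: "c \<in> Vset n N" and y_next: "(\<lambda>t m. y t m + rmul n (fstar M g) c t m) \<in> Yset n M"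
    and "cmax n c = j" and "c s k = \<sigma> * j"
    using yc by (auto simp: Zsig_def Zset_def)
  have "\<forall>t m. m < n \<longrightarrow> \<bar>c t m\<bar> \<le> j"
    using abs_le_cmax[OF c_V] \<open>cmax n c = j\<close> by simp
  then have "M k - extremal_weight n g \<sigma> j c s k \<le> \<sigma> * rmul n (fstar M g) c s k"
    using \<open>c s k = \<sigma> * j\<close> by (rule signed_rmul_fstar_ge[where g = g and k = k and n = n and M = M, OF assms(1-6)])
  moreover have "(\<lambda>m. y s m + rmul n (fstar M g) c s m) \<in> Sf n M"
    using y_next unfolding Yset_def by blast
  then have "0 \<le> y s k + rmul n (fstar M g) c s k" "y s k + rmul n (fstar M g) c s k < M k"
    using \<open>k < n\<close> unfolding Sf_def by blast+
  ultimately show ?thesis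
    using \<sigma> by auto
qed

lemma ltrans_shift_subset:
  assumes "a \<in> P" and "\<forall>a\<in>P. \<forall>b\<in>P. a + b \<in> P"
  shows "ltrans (s + a) (insert 0 P) \<subseteq> ltrans s (P :: 'g::group_add set)"
proof
  fix z assume "z \<in> ltrans (s + a) (insert 0 P)"
  then obtain p where "p \<in> insert 0 P" "z = s + a + p"
    unfolding ltrans_def by blast
  moreover have "a + p \<in> P"
    using \<open>p \<in> insert 0 P\<close> assms by auto
  ultimately show "z \<in> ltrans s P"
    by (auto simp: ltrans_def add.assoc)
qed

lemma extremal_weight_le_hfun:
  fixes g :: "nat \<Rightarrow> nat \<Rightarrow> 'g::group_add \<Rightarrow> int"
  assumes P_semigroup: "\<forall>a\<in>P. \<forall>b\<in>P. a + b \<in> P"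
    and g_supp: "\<forall>m<n. supp (g k m) \<subseteq> P"
    and x: "x \<in> Pi\<^sub>E (ltrans s P) (\<lambda>_. Sf n M)"
    and yc: "(y, c) \<in> Zset n M g N" and "cmax n c = j"
    and x_eq: "x = proj (ltrans s P) y"
  shows "extremal_weight n g \<sigma> j c s k \<le> hfun n M g N P \<sigma> j s k x"
  unfolding extremal_weight_def hfun_def
proof (rule sum_mono, clarify)
  fix a m assume "(a, m) \<in> Aset n g k"
  then have "a \<in> P"
    using g_supp by (auto simp: Aset_def supp_def)
  define E where "E = ltrans (s + a) (insert 0 P)"
  define L where "L = ltrans s P"
  define \<tau> where "\<tau> = \<sigma> * sgn (g k m a)"
  have "E \<subseteq> L"
    unfolding E_def L_def using \<open>a \<in> P\<close> P_semigroup by (rule ltrans_shift_subset)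
  have "x \<in> cfgprod E (proj E ` fst ` Zsig n M g N \<tau> j (s + a) m) (L - E) (Pi\<^sub>E (L - E) (\<lambda>_. Sf n M))"
    if extremal: "c (s + a) m = \<tau> * j"
  proof -
    have "(y, c) \<in> Zsig n M g N \<tau> j (s + a) m"
      using yc \<open>cmax n c = j\<close> extremal by (simp add: Zsig_def)
    moreover have "restrict x E = proj E y"
      using \<open>E \<subseteq> L\<close> by (auto simp: x_eq proj_def L_def fun_eq_iff)
    moreover have "E \<union> (L - E) = L"
      using \<open>E \<subseteq> L\<close> by blast
    ultimately show ?thesis
      using x by (force simp: cfgprod_def L_def PiE_def Pi_def)
  qed
  then show "\<bar>g k m a\<bar> * of_bool (c (s + a) m = \<sigma> * sgn (g k m a) * j)
      \<le> \<bar>g k m a\<bar> * of_bool (x \<in> cfgprod (ltrans (s + a) (insert 0 P))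
             (proj (ltrans (s + a) (insert 0 P)) ` fst ` Zsig n M g N (\<sigma> * sgn (g k m a)) j (s + a) m)
             (ltrans s P - ltrans (s + a) (insert 0 P))
             (Pi\<^sub>E (ltrans s P - ltrans (s + a) (insert 0 P)) (\<lambda>_. Sf n M)))"
    by (auto simp: E_def L_def \<tau>_def)
qed

lemma realized_index_bound:
  fixes g :: "nat \<Rightarrow> nat \<Rightarrow> 'g::group_add \<Rightarrow> int"
  assumes "k < n" and "\<forall>l<n. finite (supp (g k l))"
    and "(\<Sum>m<n. \<Sum>a\<in>supp (g k m). \<bar>g k m a\<bar>) < M k"
    and P_semigroup: "\<forall>a\<in>P. \<forall>b\<in>P. a + b \<in> P" and "0 \<notin> P"
    and g_supp: "\<forall>l<n. supp (g k l) \<subseteq> P"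
    and "\<sigma> \<in> {1, -1}" and "1 \<le> j" and x: "x \<in> Pi\<^sub>E (ltrans s P) (\<lambda>_. Sf n M)"
    and realized: "x \<in> proj (ltrans s P) ` fst ` (\<Union>B\<in>Pow (Aset n g k). ZBi n M g N \<sigma> j s k B i)"
  shows "(\<sigma> = 1 \<longrightarrow> i + 1 \<le> hfun n M g N P \<sigma> j s k x)
       \<and> (\<sigma> = -1 \<longrightarrow> M k - i \<le> hfun n M g N P \<sigma> j s k x)"
proof -
  obtain y c where yc: "(y, c) \<in> Zsig n M g N \<sigma> j s k" and "y s k = i"
    and "x = proj (ltrans s P) y"
    using realized unfolding ZBi_def ZB_def by auto
  then have "extremal_weight n g \<sigma> j c s k \<le> hfun n M g N P \<sigma> j s k x"
    using P_semigroup g_supp x by (intro extremal_weight_le_hfun) (auto simp: Zsig_def)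
  moreover have "\<forall>l<n. g k l 0 = 0"
    using g_supp \<open>0 \<notin> P\<close> by (auto simp: supp_def)
  then have "(\<sigma> = 1 \<longrightarrow> y s k + 1 \<le> extremal_weight n g \<sigma> j c s k)
       \<and> (\<sigma> = -1 \<longrightarrow> M k - y s k \<le> extremal_weight n g \<sigma> j c s k)"
    using assms(1-3,7,8) yc by (intro Zsig_extremal_weight_bound) auto
  ultimately show ?thesis
    using \<open>y s k = i\<close> by auto
qed

lemma card_filter_le_window:
  fixes A :: "int set"
  assumes "\<forall>i\<in>A. Q i \<longrightarrow> l \<le> i \<and> i < l + h"
  shows "card {i\<in>A. Q i} \<le> nat h"
proof -
  have "card {i\<in>A. Q i} \<le> card {l..<l + h}"
    using assms by (intro card_mono) auto
  then show ?thesis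
    by simp
qed

theorem lemma4p6:
  fixes n :: nat and M :: "nat \<Rightarrow> int" and g :: "nat \<Rightarrow> nat \<Rightarrow> 'g::{group_add, countable} \<Rightarrow> int"
    and P :: "'g set" and N :: int and Finv :: "nat \<Rightarrow> nat \<Rightarrow> 'g \<Rightarrow> real"
  assumes Gamma_inf: "infinite (UNIV :: 'g set)"
    and g_fin: "\<forall>k<n. \<forall>m<n. finite (supp (g k m))"
    and M_pos: "\<forall>k<n. 0 < M k"
    and M_dom: "\<forall>k<n. (\<Sum>m<n. \<Sum>a\<in>supp (g k m). \<bar>g k m a\<bar>) < M k"
    and P_semigroup: "\<forall>a\<in>P. \<forall>b\<in>P. a + b \<in> P"
    and P_no_e: "0 \<notin> P"
    and g_supp: "\<forall>k<n. \<forall>m<n. supp (g k m) \<subseteq> P"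
    and Finv_l1: "\<forall>k<n. \<forall>m<n. (\<lambda>t. \<bar>Finv k m t\<bar>) summable_on UNIV"
    and Finv_inv: "\<forall>k<n. \<forall>m<n.
        matmul n (\<lambda>k' m' t. real_of_int (fstar M g k' m' t)) Finv k m = ident k m \<and>
        matmul n Finv (\<lambda>k' m' t. real_of_int (fstar M g k' m' t)) k m = ident k m"
    and N_bound: "real_of_int (Max (M ` {..<n})) * norm1inf n Finv \<le> real_of_int N"
  shows "\<forall>j\<in>{1..N}. \<forall>s. \<forall>k<n. \<forall>\<sigma>\<in>{1, -1}.
           \<forall>x\<in>Pi\<^sub>E (ltrans s P) (\<lambda>_. Sf n M).
             ufun n M g N P \<sigma> j s k x \<le> hfun n M g N P \<sigma> j s k x"
proof (intro ballI allI impI)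
  fix j s k \<sigma> x
  assume "j \<in> {1..N}" and "k < n" and \<sigma>: "\<sigma> \<in> {1, -1 :: int}"
    and x: "x \<in> Pi\<^sub>E (ltrans s P) (\<lambda>_. Sf n M)"
  define h where "h = hfun n M g N P \<sigma> j s k x"
  define Q where "Q i \<longleftrightarrow> x \<in> proj (ltrans s P) ` fst ` (\<Union>B\<in>Pow (Aset n g k). ZBi n M g N \<sigma> j s k B i)"
    for i
  have window: "(\<sigma> = 1 \<longrightarrow> i + 1 \<le> h) \<and> (\<sigma> = -1 \<longrightarrow> M k - i \<le> h)" if "Q i" for i
    unfolding h_def using that g_fin M_dom P_semigroup P_no_e g_supp \<sigma> \<open>j \<in> {1..N}\<close> x \<open>k < n\<close>
    by (intro realized_index_bound) (auto simp: Q_def)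
  then have "card {i\<in>{0..M k - 1}. Q i} \<le> nat h"
    using \<sigma> by (intro card_filter_le_window[where l = "if \<sigma> = 1 then 0 else M k - h"])
      (auto dest!: window)
  moreover have "0 \<le> h"
    unfolding h_def hfun_def by (intro sum_nonneg) auto
  moreover have "ufun n M g N P \<sigma> j s k x = int (card {i\<in>{0..M k - 1}. Q i})"
    by (simp add: ufun_def Q_def Int_def conj_commute)
  ultimately show "ufun n M g N P \<sigma> j s k x \<le> hfun n M g N P \<sigma> j s k x"
    unfolding h_def by linarith
qed

end
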